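(* For every integer $n\ge2$ and every integer $k\ge0$, \[ d_{n,k}=\sum_{j=0}^{k}\binom{j+1}{n-k-j}\left(\binom{n-2j-1}{k-j}+\binom{n-2j-3}{k-j-2}\right). \]
   Context: For $n\ge1$ let $\Xi_n$ be the poset on $\{x_1,\dots,x_n\}$ whose cover relations are exactly: $x_2\prec x_1$, $x_3\prec x_2$, and for $3\le i\le n-1$, $x_i\prec x_{i+1}$ if $i$ is odd and $x_{i+1}\prec x_i$ if $i$ is even (so $x_1>x_2>x_3<x_4>x_5<\cdots$). A filter of a poset is an up-closed subset. The matchable Lucas cube $\Omega_n$ is the graph whose vertices are the filters of $\Xi_n$, two filters adjacent iff one is obtained from the other by deleting a single element. $d_{n,k}$ is the number of vertices of degree $k$ in $\Omega_n$. Binomial coefficients: for an integer $a$ and integer $b\ge0$, $\binom ab=a(a-1)\cdots(a-b+1)/b!$ (so $\binom a0=1$ for all integers $a$, and $\binom ab=0$ if $0\le a<b$); $\binom ab=0$ if $b<0$. *)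

theory Defs
  imports Main
begin

text \<open>Binomial coefficient with integer top and integer bottom, as in the paper:
  zero for negative bottom, otherwise a(a-1)...(a-b+1)/b! (an exact division).\<close>
definition ibinom :: "int \<Rightarrow> int \<Rightarrow> int" where
  "ibinom a b = (if b < 0 then 0 else (\<Prod>i<nat b. a - int i) div fact (nat b))"

text \<open>Cover relation of the poset Xi_n on elements 1..n (element i stands for x_i):
  xi_cov n a b means x_a is covered by x_b.\<close>
definition xi_cov :: "nat \<Rightarrow> nat \<Rightarrow> nat \<Rightarrow> bool" where
  "xi_cov n a b \<longleftrightarrow> a \<in> {1..n} \<and> b \<in> {1..n} \<and>
     ((a = 2 \<and> b = 1) \<or> (a = 3 \<and> b = 2) \<or>
      (\<exists>i. 3 \<le> i \<and> i \<le> n - 1 \<and>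
         ((odd i \<and> a = i \<and> b = i + 1) \<or> (even i \<and> a = i + 1 \<and> b = i))))"

definition xi_le :: "nat \<Rightarrow> nat \<Rightarrow> nat \<Rightarrow> bool" where
  "xi_le n = (xi_cov n)\<^sup>*\<^sup>*"

definition xi_filters :: "nat \<Rightarrow> nat set set" where
  "xi_filters n = {F. F \<subseteq> {1..n} \<and> (\<forall>x\<in>F. \<forall>y\<in>{1..n}. xi_le n x y \<longrightarrow> y \<in> F)}"

definition omega_adj :: "nat \<Rightarrow> nat set \<Rightarrow> nat set \<Rightarrow> bool" where
  "omega_adj n F G \<longleftrightarrow> F \<in> xi_filters n \<and> G \<in> xi_filters n \<and>
     ((\<exists>x\<in>F. G = F - {x}) \<or> (\<exists>x\<in>G. F = G - {x}))"

definition omega_deg :: "nat \<Rightarrow> nat set \<Rightarrow> nat" where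
  "omega_deg n F = card {G. omega_adj n F G}"

definition d_nk :: "nat \<Rightarrow> nat \<Rightarrow> nat" where
  "d_nk n k = card {F \<in> xi_filters n. omega_deg n F = k}"

end

theory Submission
  imports Defs "HOL.Binomial_Plus"
begin

(* The degree of a filter F in Omega_n is the number of elements x_i that can be toggled, i.e.
  added to or removed from F so that the result is again a filter. From x_3 on, the elements
  alternate between local minima and local maxima of the zigzag x_3 < x_4 > x_5 < ..., so whether
  x_i is toggleable depends only on the membership of its neighbours x_(i-1) and x_(i+1).
  Classifying filters by the membership of the last two elements turns the passage from Xi_n to
  Xi_(n+1) into a transfer-matrix step, and three such steps give the recurrence
    d(n+3,k) = d(n+2,k-1) + d(n+1,k-1) + d(n,k-1) - d(n,k-2)    (n >= 3).
  Pascal's rule applied to both binomial factors shows that the closed formula satisfies the same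
  recurrence, and the two agree for n = 2, ..., 5. *)

section \<open>The closed formula\<close>

lemma ibinom_0_right [simp]: "ibinom a 0 = 1"
  by (simp add: ibinom_def)

lemma ibinom_neg_right [simp]: "b < 0 \<Longrightarrow> ibinom a b = 0"
  by (simp add: ibinom_def)

lemma ibinom_pascal: "ibinom a b = ibinom (a - 1) b + ibinom (a - 1) (b - 1)"
proof (cases "b \<le> 0")
  case True
  then show ?thesis
    by (cases "b = 0") simp_all
next
  case False
  then have "nat b = Suc (nat (b - 1))"
    by simp
  then show ?thesis
    using False gbinomial_int_Suc_Suc[of "a - 1" "nat (b - 1)", unfolded gbinomial_prod_rev]
    by (simp add: ibinom_def atLeast0LessThan)
qed

lemma ibinom_0_left: "ibinom 0 b = (if b = 0 then 1 else 0)"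
  using gbinomial_0_left[of "nat b", where 'a=int, unfolded gbinomial_prod_rev]
  by (auto simp: ibinom_def atLeast0LessThan nat_eq_iff)

lemma ibinom_pred_self: "ibinom (b - 1) b = (if b = 0 then 1 else 0)"
  using gbinomial_eq_0[of "b - 1" "nat b", unfolded gbinomial_prod_rev]
  by (auto simp: ibinom_def atLeast0LessThan)

definition binom_pair :: "int \<Rightarrow> int \<Rightarrow> int \<Rightarrow> int" where
  "binom_pair j N K = ibinom j (N - K) * ibinom (N - 1) K"

lemma binom_pair_0_left: "binom_pair 0 N K = (if N = 0 \<and> K = 0 then 1 else 0)"
  by (auto simp: binom_pair_def ibinom_0_left ibinom_pred_self)

lemma binom_pair_eq_0:
  assumes "K < 0 \<or> N < 0"
  shows "binom_pair j N K = 0"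
  using assms by (cases "K < 0") (simp_all add: binom_pair_def)

lemma binom_pair_rec:
  "binom_pair (j + 1) N K - binom_pair (j + 1) (N - 1) (K - 1) =
     binom_pair j N K - binom_pair j (N - 1) (K - 1) + binom_pair j (N - 1) K"
  using ibinom_pascal[of "N - 1" K] ibinom_pascal[of "j + 1" "N - K"]
  by (simp add: binom_pair_def algebra_simps)

text \<open>\<open>binom_term n k j\<close> is \<open>C(j+1, n-k-j) C(n-2j-1, k-j)\<close>, the first product in the
  \<open>j\<close>-th summand of the formula.\<close>
definition binom_term :: "int \<Rightarrow> int \<Rightarrow> nat \<Rightarrow> int" where
  "binom_term n k j = binom_pair (int j + 1) (n - 2 * int j) (k - int j)"

definition binom_sum :: "int \<Rightarrow> int \<Rightarrow> int" where
  "binom_sum n k = (\<Sum>j<nat k + 1. binom_term n k j)"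

lemma binom_sum_eq_sum_lessThan:
  assumes "nat k < L"
  shows "binom_sum n k = (\<Sum>j<L. binom_term n k j)"
  unfolding binom_sum_def
proof (rule sum.mono_neutral_left)
  show "\<forall>j\<in>{..<L} - {..<nat k + 1}. binom_term n k j = 0"
    by (auto simp: binom_term_def intro!: binom_pair_eq_0)
qed (use assms in auto)

lemma binom_sum_eq_0:
  assumes "n < 0"
  shows "binom_sum n k = 0"
  using assms by (simp add: binom_sum_def binom_term_def binom_pair_eq_0)

text \<open>Pascal's rule in both binomial factors; the indicator terms come from the summand \<open>j = 0\<close>.\<close>
lemma binom_sum_rec:
  "binom_sum n k - binom_sum (n - 1) (k - 1) =
     of_bool (n = 0 \<and> k = 0) - of_bool (n = 1 \<and> k = 1) + of_bool (n = 1 \<and> k = 0)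
     + binom_sum (n - 2) (k - 1) - binom_sum (n - 3) (k - 2) + binom_sum (n - 3) (k - 1)"
proof -
  define L where "L = nat k + 2"
  define c where "c j = binom_pair (int j) (n - 2 * int j) (k - int j)
      - binom_pair (int j) (n - 2 * int j - 1) (k - int j - 1)
      + binom_pair (int j) (n - 2 * int j - 1) (k - int j)" for j
  have diff: "binom_term n k j - binom_term (n - 1) (k - 1) j = c j" for j
    using binom_pair_rec[of "int j" "n - 2 * int j" "k - int j"]
    by (simp add: binom_term_def c_def algebra_simps)
  have c_0: "c 0 = of_bool (n = 0 \<and> k = 0) - of_bool (n = 1 \<and> k = 1) + of_bool (n = 1 \<and> k = 0)"
    by (simp add: c_def binom_pair_0_left)
  have c_Suc: "c (Suc j) = binom_term (n - 2) (k - 1) j - binom_term (n - 3) (k - 2) j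
      + binom_term (n - 3) (k - 1) j" for j
    by (simp add: c_def binom_term_def algebra_simps)
  have "binom_sum n k - binom_sum (n - 1) (k - 1) = (\<Sum>j<Suc L. c j)"
    unfolding diff [symmetric] sum_subtractf
    using binom_sum_eq_sum_lessThan[of k "Suc L" n] binom_sum_eq_sum_lessThan[of "k - 1" "Suc L" "n - 1"]
    by (simp add: L_def)
  also have "\<dots> = c 0 + (\<Sum>j<L. binom_term (n - 2) (k - 1) j - binom_term (n - 3) (k - 2) j
      + binom_term (n - 3) (k - 1) j)"
    unfolding sum.lessThan_Suc_shift c_Suc ..
  also have "\<dots> = c 0 + binom_sum (n - 2) (k - 1) - binom_sum (n - 3) (k - 2) + binom_sum (n - 3) (k - 1)"
    using binom_sum_eq_sum_lessThan[of "k - 1" L "n - 2"] binom_sum_eq_sum_lessThan[of "k - 2" L "n - 3"]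
      binom_sum_eq_sum_lessThan[of "k - 1" L "n - 3"]
    by (simp add: L_def sum.distrib sum_subtractf)
  finally show ?thesis
    by (simp add: c_0)
qed

definition d_closed_form :: "int \<Rightarrow> int \<Rightarrow> int" where
  "d_closed_form n k = binom_sum n k + binom_sum (n - 2) (k - 2)"

lemma sum_eq_d_closed_form:
  fixes n k :: nat
  shows "(\<Sum>j=0..k. ibinom (int j + 1) (int n - int k - int j) *
       (ibinom (int n - 2 * int j - 1) (int k - int j) +
        ibinom (int n - 2 * int j - 3) (int k - int j - 2))) = d_closed_form (int n) (int k)"
proof -
  have summand: "ibinom (int j + 1) (int n - int k - int j) *
       (ibinom (int n - 2 * int j - 1) (int k - int j) +
        ibinom (int n - 2 * int j - 3) (int k - int j - 2))
     = binom_term (int n) (int k) j + binom_term (int n - 2) (int k - 2) j" for j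
    by (simp add: binom_term_def binom_pair_def algebra_simps)
  show ?thesis
    using binom_sum_eq_sum_lessThan[of "int k" "k + 1" "int n"]
      binom_sum_eq_sum_lessThan[of "int k - 2" "k + 1" "int n - 2"]
    by (simp add: summand sum.distrib atLeast0AtMost lessThan_Suc_atMost d_closed_form_def)
qed

lemma d_closed_form_rec:
  assumes "4 \<le> n"
  shows "d_closed_form n k = d_closed_form (n - 1) (k - 1) + d_closed_form (n - 2) (k - 1)
    + d_closed_form (n - 3) (k - 1) - d_closed_form (n - 3) (k - 2)"
  using binom_sum_rec[of n k] binom_sum_rec[of "n - 2" "k - 2"] assms
  by (simp add: d_closed_form_def)

lemma binom_sum_0: "binom_sum 0 k = of_bool (k = 0)"
  using binom_sum_rec[of 0 k] by (simp add: binom_sum_eq_0)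

lemma binom_sum_1: "binom_sum 1 k = of_bool (k = 0)"
  using binom_sum_rec[of 1 k] binom_sum_0[of "k - 1"] by (simp add: binom_sum_eq_0)

lemma binom_sum_2: "binom_sum 2 k = 2 * of_bool (k = 1)"
  using binom_sum_rec[of 2 k] binom_sum_1[of "k - 1"] binom_sum_0[of "k - 1"]
  by (auto simp: binom_sum_eq_0)

lemma binom_sum_3: "binom_sum 3 k = 2 * of_bool (k = 1) + of_bool (k = 2)"
  using binom_sum_rec[of 3 k] binom_sum_2[of "k - 1"] binom_sum_1[of "k - 1"]
    binom_sum_0[of "k - 2"] binom_sum_0[of "k - 1"]
  by auto

lemma binom_sum_4: "binom_sum 4 k = of_bool (k = 1) + 3 * of_bool (k = 2) + of_bool (k = 3)"
  using binom_sum_rec[of 4 k] binom_sum_3[of "k - 1"] binom_sum_2[of "k - 1"]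
    binom_sum_1[of "k - 2"] binom_sum_1[of "k - 1"]
  by auto

lemma binom_sum_5: "binom_sum 5 k = 5 * of_bool (k = 2) + 2 * of_bool (k = 3) + of_bool (k = 4)"
  using binom_sum_rec[of 5 k] binom_sum_4[of "k - 1"] binom_sum_3[of "k - 1"]
    binom_sum_2[of "k - 2"] binom_sum_2[of "k - 1"]
  by auto

section \<open>Filters of Xi_n and their degree\<close>

lemma xi_cov_iff:
  "xi_cov n a b \<longleftrightarrow>
     (a = 2 \<and> b = 1 \<and> 2 \<le> n) \<or> (a = 3 \<and> b = 2 \<and> 3 \<le> n) \<or>
     (3 \<le> a \<and> odd a \<and> b = a + 1 \<and> b \<le> n) \<or> (3 \<le> b \<and> even b \<and> a = b + 1 \<and> a \<le> n)"
  unfolding xi_cov_def by (auto 0 4 intro: exI[of _ a] exI[of _ b])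

lemma xi_cov_2: "xi_cov 2 a b \<longleftrightarrow> a = 2 \<and> b = 1"
  by (auto simp: xi_cov_iff)

lemma xi_cov_3: "xi_cov 3 a b \<longleftrightarrow> (a = 2 \<and> b = 1) \<or> (a = 3 \<and> b = 2)"
  by (auto simp: xi_cov_iff)

lemma xi_cov_Suc:
  assumes "3 \<le> n"
  shows "xi_cov (Suc n) a b \<longleftrightarrow>
    xi_cov n a b \<or> (odd n \<and> a = n \<and> b = Suc n) \<or> (even n \<and> a = Suc n \<and> b = n)"
  unfolding xi_cov_iff using assms
  by (cases "a = Suc n"; cases "b = Suc n") auto

lemma xi_cov_range: "xi_cov n a b \<Longrightarrow> a \<in> {1..n} \<and> b \<in> {1..n} \<and> a \<noteq> b"
  unfolding xi_cov_iff by auto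

lemma xi_cov_to_last:
  assumes "3 \<le> n"
  shows "xi_cov n a n \<longleftrightarrow> even n \<and> a = n - 1"
proof -
  have "even n \<Longrightarrow> 4 \<le> n"
    using assms by presburger
  then show ?thesis
    using assms unfolding xi_cov_iff by auto
qed

lemma xi_cov_from_last: "3 \<le> n \<Longrightarrow> xi_cov n n b \<longleftrightarrow> odd n \<and> b = n - 1"
  unfolding xi_cov_iff by auto

definition xi_filter :: "nat \<Rightarrow> nat set \<Rightarrow> bool" where
  "xi_filter n F \<longleftrightarrow> F \<subseteq> {1..n} \<and> (\<forall>a b. xi_cov n a b \<longrightarrow> a \<in> F \<longrightarrow> b \<in> F)"

lemma xi_filters_eq: "xi_filters n = {F. xi_filter n F}"
proof (intro set_eqI iffI; simp)
  fix F
  assume "F \<in> xi_filters n"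
  then show "xi_filter n F"
    unfolding xi_filters_def xi_filter_def xi_le_def using xi_cov_range by blast
next
  fix F
  assume F: "xi_filter n F"
  have "y \<in> F" if "xi_le n x y" "x \<in> F" for x y
    using that unfolding xi_le_def
    by (induction rule: rtranclp_induct) (use F in \<open>auto simp: xi_filter_def\<close>)
  with F show "F \<in> xi_filters n"
    unfolding xi_filters_def xi_filter_def by blast
qed

lemma finite_xi_filter: "finite {F. xi_filter n F \<and> P F}"
  by (rule finite_subset[of _ "Pow {1..n}"]) (auto simp: xi_filter_def)

text \<open>The same condition decides whether \<open>i\<close> may be removed from a filter \<open>F\<close> (if \<open>i \<in> F\<close>)
  or added to it (if \<open>i \<notin> F\<close>).\<close>
definition toggleable :: "nat \<Rightarrow> nat set \<Rightarrow> nat \<Rightarrow> bool" where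
  "toggleable n F i \<longleftrightarrow> (\<forall>a. xi_cov n a i \<longrightarrow> a \<notin> F) \<and> (\<forall>b. xi_cov n i b \<longrightarrow> b \<in> F)"

definition toggle :: "nat \<Rightarrow> nat set \<Rightarrow> nat set" where
  "toggle i F = (if i \<in> F then F - {i} else insert i F)"

lemma mem_toggle_iff: "x \<in> toggle i F \<longleftrightarrow> (x = i \<longleftrightarrow> x \<notin> F)"
  by (auto simp: toggle_def)

lemma xi_filter_toggle_iff:
  assumes F: "xi_filter n F" and i: "i \<in> {1..n}"
  shows "xi_filter n (toggle i F) \<longleftrightarrow> toggleable n F i"
proof (cases "i \<in> F")
  case True
  have "xi_filter n (F - {i}) \<longleftrightarrow> (\<forall>a. xi_cov n a i \<longrightarrow> a \<notin> F)"
    using F xi_cov_range[of n _ i] unfolding xi_filter_def by blast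
  moreover have "\<forall>b. xi_cov n i b \<longrightarrow> b \<in> F"
    using F True unfolding xi_filter_def by blast
  ultimately show ?thesis
    using True unfolding toggle_def toggleable_def by simp
next
  case False
  have "xi_filter n (insert i F) \<longleftrightarrow> (\<forall>b. xi_cov n i b \<longrightarrow> b \<in> F)"
    using F i xi_cov_range[of n i] unfolding xi_filter_def by blast
  moreover have "\<forall>a. xi_cov n a i \<longrightarrow> a \<notin> F"
    using F False unfolding xi_filter_def by blast
  ultimately show ?thesis
    using False unfolding toggle_def toggleable_def by simp
qed

lemma omega_adj_iff:
  assumes F: "xi_filter n F"
  shows "omega_adj n F G \<longleftrightarrow> (\<exists>i\<in>{1..n}. toggleable n F i \<and> G = toggle i F)"
proof
  assume adj: "omega_adj n F G"
  then have G: "xi_filter n G"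
    by (simp add: omega_adj_def xi_filters_eq)
  from adj consider (del) x where "x \<in> F" "G = F - {x}" | (ins) x where "x \<in> G" "F = G - {x}"
    unfolding omega_adj_def by blast
  then obtain i where i: "i \<in> {1..n}" "G = toggle i F"
  proof cases
    case (del x)
    then show ?thesis
      using F that[of x] by (auto simp: toggle_def xi_filter_def)
  next
    case (ins x)
    then have "G = toggle x F"
      by (auto simp: toggle_def)
    then show ?thesis
      using G ins(1) that[of x] by (auto simp: xi_filter_def)
  qed
  with F G show "\<exists>i\<in>{1..n}. toggleable n F i \<and> G = toggle i F"
    using xi_filter_toggle_iff by blast
next
  assume "\<exists>i\<in>{1..n}. toggleable n F i \<and> G = toggle i F"
  then obtain i where i: "i \<in> {1..n}" "toggleable n F i" "G = toggle i F"
    by blast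
  then have "xi_filter n G"
    using F xi_filter_toggle_iff by blast
  with F i(3) show "omega_adj n F G"
    unfolding omega_adj_def xi_filters_eq toggle_def by auto
qed

lemma omega_deg_eq_card_toggleable:
  assumes "xi_filter n F"
  shows "omega_deg n F = card {i\<in>{1..n}. toggleable n F i}"
proof -
  have "{G. omega_adj n F G} = (\<lambda>i. toggle i F) ` {i\<in>{1..n}. toggleable n F i}"
    using omega_adj_iff[OF assms] by blast
  moreover have "inj (\<lambda>i. toggle i F)"
  proof (rule injI)
    fix i j
    assume eq: "toggle i F = toggle j F"
    have "i \<in> toggle j F \<longleftrightarrow> i \<notin> F"
      unfolding eq [symmetric] by (simp add: mem_toggle_iff)
    then show "i = j"
      by (auto simp: mem_toggle_iff)
  qed
  ultimately show ?thesis
    unfolding omega_deg_def by (simp add: card_image inj_on_subset)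
qed

section \<open>Extending Xi_n by one element\<close>

lemma toggleable_last:
  assumes "3 \<le> n"
  shows "toggleable n F n \<longleftrightarrow> (n - 1 \<in> F \<longleftrightarrow> odd n)"
  using xi_cov_to_last[OF assms] xi_cov_from_last[OF assms] unfolding toggleable_def by auto

lemma toggleable_Suc_penultimate:
  assumes "3 \<le> n"
  shows "toggleable (Suc n) F n \<longleftrightarrow> (n - 1 \<in> F \<longleftrightarrow> odd n) \<and> (Suc n \<in> F \<longleftrightarrow> odd n)"
  using xi_cov_to_last[OF assms] xi_cov_from_last[OF assms] xi_cov_Suc[OF assms]
  unfolding toggleable_def by auto

lemma toggleable_Suc_lower:
  assumes "3 \<le> n" and "i < n"
  shows "toggleable (Suc n) F i \<longleftrightarrow> toggleable n (F - {Suc n}) i"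
proof -
  have "xi_cov (Suc n) a i \<longleftrightarrow> xi_cov n a i" "xi_cov (Suc n) i a \<longleftrightarrow> xi_cov n i a" for a
    using xi_cov_Suc[OF assms(1)] assms(2) by auto
  then show ?thesis
    unfolding toggleable_def using xi_cov_range[of n] by fastforce
qed

text \<open>For odd \<open>n\<close> the element \<open>x\<^sub>n\<close> is covered by \<open>x\<^sub>n\<^sub>+\<^sub>1\<close>, for even \<open>n\<close> it covers it.\<close>
definition cover_ok :: "nat \<Rightarrow> bool \<Rightarrow> bool \<Rightarrow> bool" where
  "cover_ok n q r \<longleftrightarrow> (if odd n then q \<longrightarrow> r else r \<longrightarrow> q)"

lemma xi_filter_Suc_iff:
  assumes n: "3 \<le> n"
  shows "xi_filter (Suc n) F \<longleftrightarrow>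
    F \<subseteq> {1..Suc n} \<and> xi_filter n (F - {Suc n}) \<and> cover_ok n (n \<in> F) (Suc n \<in> F)"
proof -
  have "(\<forall>a b. xi_cov n a b \<longrightarrow> a \<in> F - {Suc n} \<longrightarrow> b \<in> F - {Suc n}) \<longleftrightarrow>
      (\<forall>a b. xi_cov n a b \<longrightarrow> a \<in> F \<longrightarrow> b \<in> F)"
    using xi_cov_range[of n] by fastforce
  then show ?thesis
    unfolding xi_filter_def cover_ok_def xi_cov_Suc[OF n] by auto
qed

definition inner_degree :: "nat \<Rightarrow> nat set \<Rightarrow> nat" where
  "inner_degree n F = card {i\<in>{1..<n}. toggleable n F i}"

lemma omega_deg_eq_inner_degree:
  assumes "3 \<le> n" and "xi_filter n F"
  shows "omega_deg n F = inner_degree n F + of_bool (n - 1 \<in> F \<longleftrightarrow> odd n)"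
proof -
  have "{i\<in>{1..n}. toggleable n F i} = {i\<in>{1..<n}. toggleable n F i} \<union> {i. i = n \<and> toggleable n F n}"
    using assms(1) by (auto simp: le_less)
  then show ?thesis
    using assms toggleable_last omega_deg_eq_card_toggleable by (simp add: inner_degree_def)
qed

lemma inner_degree_Suc:
  assumes "3 \<le> n"
  shows "inner_degree (Suc n) F =
    inner_degree n (F - {Suc n}) + of_bool ((n - 1 \<in> F \<longleftrightarrow> odd n) \<and> (Suc n \<in> F \<longleftrightarrow> odd n))"
proof -
  have "{i\<in>{1..<Suc n}. toggleable (Suc n) F i} =
      {i\<in>{1..<n}. toggleable n (F - {Suc n}) i} \<union> {i. i = n \<and> toggleable (Suc n) F n}"
    using assms toggleable_Suc_lower[OF assms] by (auto simp: less_Suc_eq)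
  then show ?thesis
    using assms toggleable_Suc_penultimate by (simp add: inner_degree_def)
qed

text \<open>Filters classified by the membership of \<open>x\<^sub>n\<^sub>-\<^sub>1\<close> and \<open>x\<^sub>n\<close>, the state of the transfer
  step. The toggleability of \<open>x\<^sub>n\<close> is not counted, as it changes when \<open>x\<^sub>n\<^sub>+\<^sub>1\<close> is added.\<close>
definition end_filters :: "nat \<Rightarrow> bool \<Rightarrow> bool \<Rightarrow> int \<Rightarrow> nat set set" where
  "end_filters n p q k =
    {F. xi_filter n F \<and> (n - 1 \<in> F \<longleftrightarrow> p) \<and> (n \<in> F \<longleftrightarrow> q) \<and> int (inner_degree n F) = k}"

definition end_count :: "nat \<Rightarrow> bool \<Rightarrow> bool \<Rightarrow> int \<Rightarrow> int" where
  "end_count n p q k = int (card (end_filters n p q k))"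

lemma finite_end_filters: "finite (end_filters n p q k)"
  unfolding end_filters_def by (rule finite_xi_filter)

lemma end_filters_Suc_empty:
  assumes "3 \<le> n" and "\<not> cover_ok n q r"
  shows "end_filters (Suc n) q r k = {}"
proof -
  have "cover_ok n q r" if "F \<in> end_filters (Suc n) q r k" for F
  proof -
    have eqs: "n \<in> F \<longleftrightarrow> q" "Suc n \<in> F \<longleftrightarrow> r"
      using that by (simp_all add: end_filters_def)
    have "cover_ok n (n \<in> F) (Suc n \<in> F)"
      using that unfolding end_filters_def xi_filter_Suc_iff[OF assms(1)] by blast
    then show ?thesis
      unfolding eqs .
  qed
  with assms(2) show ?thesis
    by blast
qed

lemma bij_betw_end_filters_Suc:
  assumes n: "3 \<le> n" and ok: "cover_ok n q r"
  shows "bij_betw (\<lambda>F. F - {Suc n}) (end_filters (Suc n) q r k)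
    (\<Union>p. end_filters n p q (k - of_bool ((p \<longleftrightarrow> odd n) \<and> (r \<longleftrightarrow> odd n))))"
    (is "bij_betw _ ?A ?B")
proof (rule bij_betw_byWitness[where f' = "\<lambda>F. if r then insert (Suc n) F else F"])
  show "\<forall>F\<in>?A. (if r then insert (Suc n) (F - {Suc n}) else F - {Suc n}) = F"
    by (auto simp: end_filters_def)
  show "\<forall>F\<in>?B. (if r then insert (Suc n) F else F) - {Suc n} = F"
    by (auto simp: end_filters_def xi_filter_def)
  show "(\<lambda>F. F - {Suc n}) ` ?A \<subseteq> ?B"
  proof clarify
    fix F
    assume "F \<in> ?A"
    then have "F - {Suc n} \<in> end_filters n (n - 1 \<in> F) q
        (k - of_bool ((n - 1 \<in> F \<longleftrightarrow> odd n) \<and> (r \<longleftrightarrow> odd n)))"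
      using n xi_filter_Suc_iff[OF n] inner_degree_Suc[OF n, of F]
      by (auto simp: end_filters_def)
    then show "F - {Suc n} \<in> ?B"
      by blast
  qed
  show "(\<lambda>F. if r then insert (Suc n) F else F) ` ?B \<subseteq> ?A"
  proof clarify
    fix F p
    assume F: "F \<in> end_filters n p q (k - of_bool ((p \<longleftrightarrow> odd n) \<and> (r \<longleftrightarrow> odd n)))"
    define G where "G = (if r then insert (Suc n) F else F)"
    have "Suc n \<notin> F"
      using F by (auto simp: end_filters_def xi_filter_def)
    then have G: "G - {Suc n} = F" "Suc n \<in> G \<longleftrightarrow> r" "n \<in> G \<longleftrightarrow> n \<in> F" "n - 1 \<in> G \<longleftrightarrow> n - 1 \<in> F"
      using n by (auto simp: G_def)
    have "xi_filter (Suc n) G"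
      unfolding xi_filter_Suc_iff[OF n] G using F ok by (auto simp: end_filters_def xi_filter_def G_def)
    then show "G \<in> ?A"
      using F G inner_degree_Suc[OF n, of G] by (auto simp: end_filters_def)
  qed
qed

lemma end_count_Suc:
  assumes n: "3 \<le> n"
  shows "end_count (Suc n) q r k = (if cover_ok n q r
    then (\<Sum>p\<in>UNIV. end_count n p q (k - of_bool ((p \<longleftrightarrow> odd n) \<and> (r \<longleftrightarrow> odd n)))) else 0)"
proof (cases "cover_ok n q r")
  case True
  have "card (end_filters (Suc n) q r k) =
      card (\<Union>p. end_filters n p q (k - of_bool ((p \<longleftrightarrow> odd n) \<and> (r \<longleftrightarrow> odd n))))"
    using bij_betw_end_filters_Suc[OF n True] by (rule bij_betw_same_card)
  also have "\<dots> = (\<Sum>p\<in>UNIV. card (end_filters n p q (k - of_bool ((p \<longleftrightarrow> odd n) \<and> (r \<longleftrightarrow> odd n)))))"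
    by (rule card_UN_disjoint) (simp_all add: finite_end_filters, auto simp: end_filters_def)
  finally show ?thesis
    using True by (simp add: end_count_def)
qed (simp add: end_count_def end_filters_Suc_empty n)

text \<open>With an integer degree argument, negative degrees simply give \<open>0\<close>, so the recurrences need
  no side conditions.\<close>
definition degree_count :: "nat \<Rightarrow> int \<Rightarrow> int" where
  "degree_count n k = int (card {F \<in> xi_filters n. int (omega_deg n F) = k})"

lemma degree_count_eq_sum_end_count:
  assumes n: "3 \<le> n"
  shows "degree_count n k = (\<Sum>p\<in>UNIV. \<Sum>q\<in>UNIV. end_count n p q (k - of_bool (p \<longleftrightarrow> odd n)))"
proof -
  let ?E = "\<lambda>p q. end_filters n p q (k - of_bool (p \<longleftrightarrow> odd n))"
  have "{F \<in> xi_filters n. int (omega_deg n F) = k} = (\<Union>p. \<Union>q. ?E p q)"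
  proof (intro set_eqI iffI)
    fix F
    assume "F \<in> {F \<in> xi_filters n. int (omega_deg n F) = k}"
    then have F: "xi_filter n F" and deg: "int (omega_deg n F) = k"
      by (simp_all add: xi_filters_eq)
    have "int (inner_degree n F) = k - of_bool (n - 1 \<in> F \<longleftrightarrow> odd n)"
      using deg omega_deg_eq_inner_degree[OF n F] by simp
    with F have "F \<in> ?E (n - 1 \<in> F) (n \<in> F)"
      by (simp add: end_filters_def)
    then show "F \<in> (\<Union>p. \<Union>q. ?E p q)"
      by blast
  next
    fix F
    assume "F \<in> (\<Union>p. \<Union>q. ?E p q)"
    then obtain p q where "F \<in> ?E p q"
      by blast
    then show "F \<in> {F \<in> xi_filters n. int (omega_deg n F) = k}"
      by (auto simp: xi_filters_eq end_filters_def omega_deg_eq_inner_degree[OF n])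
  qed
  also have "card \<dots> = (\<Sum>p\<in>UNIV. card (\<Union>q. ?E p q))"
    by (rule card_UN_disjoint) (simp_all add: finite_end_filters, auto simp: end_filters_def)
  also have "\<dots> = (\<Sum>p\<in>UNIV. \<Sum>q\<in>UNIV. card (?E p q))"
    by (intro sum.cong refl card_UN_disjoint)
      (simp_all add: finite_end_filters, auto simp: end_filters_def)
  finally show ?thesis
    by (simp add: degree_count_def end_count_def)
qed

lemma degree_count_rec:
  assumes n: "3 \<le> n"
  shows "degree_count (n + 3) k = degree_count (n + 2) (k - 1) + degree_count (n + 1) (k - 1)
    + degree_count n (k - 1) - degree_count n (k - 2)"
proof -
  have n': "3 \<le> Suc n" "3 \<le> Suc (Suc n)" "3 \<le> Suc (Suc (Suc n))"
    using n by simp_all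
  note expand = degree_count_eq_sum_end_count[OF n] degree_count_eq_sum_end_count[OF n'(1)]
    degree_count_eq_sum_end_count[OF n'(2)] degree_count_eq_sum_end_count[OF n'(3)]
    end_count_Suc[OF n] end_count_Suc[OF n'(1)] end_count_Suc[OF n'(2)]
  have Suc_eqs: "n + 3 = Suc (Suc (Suc n))" "n + 2 = Suc (Suc n)"
    by simp_all
  show ?thesis
    unfolding Suc_eqs by (cases "odd n") (simp_all add: expand UNIV_bool cover_ok_def diff_diff_eq)
qed

section \<open>Small cases\<close>

lemma Collect_mem_insert:
  "{x \<in> insert a A. P x} = (if P a then insert a {x \<in> A. P x} else {x \<in> A. P x})"
  by auto

lemma card_sep_doubleton: "a \<noteq> b \<Longrightarrow> card {x \<in> {a, b}. P x} = of_bool (P a) + of_bool (P b)"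
  unfolding Collect_mem_insert by simp

lemma inner_degree_3:
  "inner_degree 3 F = of_bool (2 \<notin> F) + of_bool (3 \<notin> F \<and> 1 \<in> F)"
proof -
  have toggles: "toggleable 3 F 1 \<longleftrightarrow> 2 \<notin> F" "toggleable 3 F 2 \<longleftrightarrow> 3 \<notin> F \<and> 1 \<in> F"
    by (auto simp: toggleable_def xi_cov_3)
  have interval: "{1..<3::nat} = {1, 2}"
    by auto
  have "inner_degree 3 F = of_bool (toggleable 3 F 1) + of_bool (toggleable 3 F 2)"
    unfolding inner_degree_def interval by (rule card_sep_doubleton) simp
  then show ?thesis
    unfolding toggles .
qed

lemma xi_filters_3: "xi_filters 3 = {{}, {1}, {1,2}, {1,2,3}}"
proof -
  have "{1..3::nat} = {1,2,3}"
    by auto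
  then have "xi_filters 3 = {F. F \<subseteq> {1,2,3} \<and> (2 \<in> F \<longrightarrow> 1 \<in> F) \<and> (3 \<in> F \<longrightarrow> 2 \<in> F)}"
    by (auto simp: xi_filters_eq xi_filter_def xi_cov_3)
  also have "\<dots> = {{}, {1}, {1,2}, {1,2,3}}"
  proof (intro equalityI subsetI)
    fix F
    assume "F \<in> {F. F \<subseteq> {1,2,3} \<and> (2 \<in> F \<longrightarrow> 1 \<in> F) \<and> (3 \<in> F \<longrightarrow> 2 \<in> F)}"
    then show "F \<in> {{}, {1}, {1,2}, {1,2,3}}"
      by (cases "1 \<in> F"; cases "2 \<in> F"; cases "3 \<in> F") auto
  qed auto
  finally show ?thesis .
qed

lemma end_count_3:
  "end_count 3 p q k = of_bool (\<not> p \<and> \<not> q \<and> k = 1) + of_bool (\<not> p \<and> \<not> q \<and> k = 2)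
    + of_bool (p \<and> \<not> q \<and> k = 1) + of_bool (p \<and> q \<and> k = 0)"
proof -
  have filters: "end_filters 3 p q k =
      {F \<in> {{}, {1}, {1,2}, {1,2,3}}. (2 \<in> F \<longleftrightarrow> p) \<and> (3 \<in> F \<longleftrightarrow> q) \<and> int (inner_degree 3 F) = k}"
  proof -
    have "xi_filter 3 F \<longleftrightarrow> F \<in> {{}, {1}, {1,2}, {1,2,3}}" for F
      using xi_filters_3 unfolding xi_filters_eq by (metis mem_Collect_eq)
    then show ?thesis
      unfolding end_filters_def by (intro Collect_cong) simp
  qed
  show ?thesis
    unfolding end_count_def filters Collect_mem_insert
    by (cases p; cases q) (simp_all add: inner_degree_3)
qed

lemma xi_filters_2: "xi_filters 2 = {{}, {1}, {1,2}}"
proof -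
  have "{1..2::nat} = {1,2}"
    by auto
  then have "xi_filters 2 = {F. F \<subseteq> {1,2} \<and> (2 \<in> F \<longrightarrow> 1 \<in> F)}"
    by (auto simp: xi_filters_eq xi_filter_def xi_cov_2)
  also have "\<dots> = {{}, {1}, {1,2}}"
  proof (intro equalityI subsetI)
    fix F
    assume "F \<in> {F. F \<subseteq> {1,2} \<and> (2 \<in> F \<longrightarrow> 1 \<in> F)}"
    then show "F \<in> {{}, {1}, {1,2}}"
      by (cases "1 \<in> F"; cases "2 \<in> F") auto
  qed auto
  finally show ?thesis .
qed

lemma degree_count_2: "degree_count 2 k = 2 * of_bool (k = 1) + of_bool (k = 2)"
proof -
  have toggles: "toggleable 2 F 1 \<longleftrightarrow> 2 \<notin> F" "toggleable 2 F 2 \<longleftrightarrow> 1 \<in> F" for F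
    by (auto simp: toggleable_def xi_cov_2)
  have interval: "{1..2::nat} = {1, 2}"
    by auto
  have "omega_deg 2 F = of_bool (2 \<notin> F) + of_bool (1 \<in> F)" if "F \<in> xi_filters 2" for F
  proof -
    have "omega_deg 2 F = card {i \<in> {1, 2}. toggleable 2 F i}"
      using that omega_deg_eq_card_toggleable[of 2 F] unfolding xi_filters_eq interval by blast
    also have "\<dots> = of_bool (toggleable 2 F 1) + of_bool (toggleable 2 F 2)"
      by (rule card_sep_doubleton) simp
    also have "\<dots> = of_bool (2 \<notin> F) + of_bool (1 \<in> F)"
      unfolding toggles ..
    finally show ?thesis .
  qed
  then have "omega_deg 2 {} = 1" "omega_deg 2 {1} = 2" "omega_deg 2 {1,2} = 1"
    by (simp_all add: xi_filters_2)
  then show ?thesis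
    unfolding degree_count_def xi_filters_2 Collect_mem_insert by auto
qed

lemma degree_count_eq_d_closed_form_small:
  assumes "2 \<le> n" "n \<le> 5"
  shows "degree_count n k = d_closed_form (int n) k"
proof -
  note count_3 = degree_count_eq_sum_end_count[of 3] end_count_3
  note count_4 = degree_count_eq_sum_end_count[of 4] end_count_Suc[of 3, simplified] count_3
  note count_5 = degree_count_eq_sum_end_count[of 5] end_count_Suc[of 4, simplified] count_4
  have "n = 2 \<or> n = 3 \<or> n = 4 \<or> n = 5"
    using assms by auto
  moreover have "degree_count 2 k = d_closed_form 2 k"
    by (simp add: degree_count_2 d_closed_form_def binom_sum_2 binom_sum_0)
  moreover have "degree_count 3 k = d_closed_form 3 k"
    by (simp add: count_3 UNIV_bool d_closed_form_def binom_sum_3 binom_sum_1)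
  moreover have "degree_count 4 k = d_closed_form 4 k"
    by (simp add: count_4 UNIV_bool cover_ok_def d_closed_form_def binom_sum_4 binom_sum_2)
  moreover have "degree_count 5 k = d_closed_form 5 k"
    by (simp add: count_5 UNIV_bool cover_ok_def d_closed_form_def binom_sum_5 binom_sum_3)
  ultimately show ?thesis
    by auto
qed

lemma degree_count_eq_d_closed_form:
  assumes "2 \<le> n"
  shows "degree_count n k = d_closed_form (int n) k"
  using assms
proof (induction n arbitrary: k rule: less_induct)
  case (less n)
  show ?case
  proof (cases "n \<le> 5")
    case True
    with less.prems show ?thesis
      by (rule degree_count_eq_d_closed_form_small)
  next
    case False
    define m where "m = n - 3"
    have m: "n = m + 3" "3 \<le> m"
      using False by (simp_all add: m_def)
    have IH: "degree_count (m + 2) k' = d_closed_form (int m + 2) k'"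
      "degree_count (m + 1) k' = d_closed_form (int m + 1) k'"
      "degree_count m k' = d_closed_form (int m) k'" for k'
      using less.IH[of "m + 2" k'] less.IH[of "m + 1" k'] less.IH[of m k'] m by (simp_all add: add.commute)
    have "degree_count n k = degree_count (m + 2) (k - 1) + degree_count (m + 1) (k - 1)
        + degree_count m (k - 1) - degree_count m (k - 2)"
      using degree_count_rec[OF m(2)] m(1) by simp
    also have "\<dots> = d_closed_form (int m + 2) (k - 1) + d_closed_form (int m + 1) (k - 1)
        + d_closed_form (int m) (k - 1) - d_closed_form (int m) (k - 2)"
      by (simp only: IH)
    also have "\<dots> = d_closed_form (int n) k"
      using d_closed_form_rec[of "int n" k] m by (simp add: algebra_simps)
    finally show ?thesis .
  qed
qed

theorem mainTheorem17:
  fixes n k :: nat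
  assumes "2 \<le> n"
  shows "int (d_nk n k) =
    (\<Sum>j=0..k. ibinom (int j + 1) (int n - int k - int j) *
       (ibinom (int n - 2 * int j - 1) (int k - int j) +
        ibinom (int n - 2 * int j - 3) (int k - int j - 2)))"
proof -
  have "int (d_nk n k) = degree_count n (int k)"
    by (simp add: d_nk_def degree_count_def)
  also have "\<dots> = d_closed_form (int n) (int k)"
    using assms by (rule degree_count_eq_d_closed_form)
  finally show ?thesis
    by (simp only: sum_eq_d_closed_form)
qed

end
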